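(* Let $X_1,\dots,X_n\in\mathbb{R}^d$, and let $f^*=\nabla\psi_{f^*}$ for a differentiable $\psi_{f^*}:\mathbb{R}^d\to\mathbb{R}$ satisfying: (A1) $\psi_{f^*}(z)\ge\psi_{f^*}(x)+\langle\nabla\psi_{f^*}(x),z-x\rangle+\frac{\lambda}{2}\|x-z\|_2^2$ for all $x,z$ (some $\lambda>0$); (A2) $\psi_{f^*}(z)\le\psi_{f^*}(x)+\langle\nabla\psi_{f^*}(x),z-x\rangle+\frac{L}{2}\|x-z\|_2^2$ for all $x,z$ (some $L>0$); (A3) $\max_i\|f^*(X_i)\|_2\le B$ for some $B<\infty$. Let $\theta_i^*=f^*(X_i)$, $\nu_n^*=\frac1n\sum_{i=1}^n\delta_{\theta_i^*}$, $\mu_n=\frac1n\sum_{i=1}^n\delta_{X_i}$, and let $\widehat\nu=\sum_{j=1}^p\widehat\alpha_j\delta_{\widehat\theta_j}$ be any atomic probability measure on $\mathbb{R}^d$ ($\widehat\alpha_j>0$, $\sum_j\widehat\alpha_j=1$). Let $\widehat\Gamma\in\mathbb{R}_+^{n\times p}$ be an optimal coupling, i.e. a minimizer of $\sum_{i,j}\Gamma_{ij}\frac12\|X_i-\widehat\theta_j\|_2^2$ subject to $\sum_i\Gamma_{ij}=\widehat\alpha_j$ for all $j$ and $\sum_j\Gamma_{ij}=1/n$ for all $i$, and define $\widehat f(X_i)=n\sum_{j=1}^p\widehat\Gamma_{ij}\widehat\theta_j$. Then $$\frac1n\sum_{i=1}^n\|\widehat f(X_i)-f^*(X_i)\|_2^2\le\frac{L}{\lambda}\,\mathsf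 W_2^2(\nu_n^*,\widehat\nu).$$
   Context: For probability measures $\mu,\nu$ on $\mathbb{R}^d$ with finite second moments, $\mathsf W_2^2(\mu,\nu)=\inf_{\gamma}\int\int\|x-y\|_2^2\,d\gamma(x,y)$, the infimum over all couplings $\gamma$ of $\mu$ and $\nu$ (probability measures on $\mathbb{R}^d\times\mathbb{R}^d$ with marginals $\mu$ and $\nu$). *)

theory Defs
  imports "HOL-Probability.Probability"
begin

definition atomic_measure :: "nat \<Rightarrow> (nat \<Rightarrow> real) \<Rightarrow> (nat \<Rightarrow> 'a::euclidean_space) \<Rightarrow> 'a measure" where
  "atomic_measure p w a =
     measure_of UNIV (sets borel) (\<lambda>A. \<Sum>j<p. ennreal (w j) * indicator A (a j))"

definition W2sq :: "'a::euclidean_space measure \<Rightarrow> 'a measure \<Rightarrow> ennreal" where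
  "W2sq \<mu> \<nu> = Inf {(\<integral>\<^sup>+ z. ennreal ((norm (fst z - snd z))\<^sup>2) \<partial>\<gamma>) | \<gamma>.
      sets \<gamma> = sets (borel \<Otimes>\<^sub>M borel) \<and>
      distr \<gamma> borel fst = \<mu> \<and> distr \<gamma> borel snd = \<nu>}"

end

(*
  Let \<phi> be the convex conjugate of \<psi>. Strong convexity (A1) makes \<phi> smooth with constant
  1/lam, and smoothness (A2) makes it strongly convex with constant 1/L, both around the points
  f x, where \<phi> (f x) = x \<bullet> f x - \<psi> x. The lower bound at the barycentre
  n \<Sum>j \<Gamma> i j \<theta> j together with Jensen's inequality for \<phi> bounds the error of row i by
  \<Sum>j \<Gamma> i j D i j, where D i j = \<phi> (\<theta> j) + \<psi> (X i) - X i \<bullet> \<theta> j. The gap D differs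
  from the quadratic cost only by a separable term a i + b j, so \<Gamma> also minimises the total gap
  among couplings with the same marginals; for any such coupling G the upper bound gives
  D i j \<le> |f (X i) - \<theta> j|^2 / (2 lam). Finally, every coupling measure of the two atomic
  measures induces a coupling matrix of no larger cost, which turns the bound into one by W2sq.
*)

theory Submission
  imports Defs
begin

section \<open>Convex conjugate\<close>

lemma inner_le_weighted_norms:
  fixes d e :: "'a::real_inner"
  assumes "c > 0"
  shows "d \<bullet> e \<le> c / 2 * (norm d)\<^sup>2 + 1 / (2 * c) * (norm e)\<^sup>2"
proof -
  have "0 \<le> (norm (c *\<^sub>R d - e))\<^sup>2" by simp
  also have "\<dots> = c\<^sup>2 * (norm d)\<^sup>2 - 2 * c * (d \<bullet> e) + (norm e)\<^sup>2"
    unfolding power2_norm_eq_inner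
    by (simp add: inner_diff_left inner_diff_right inner_commute power2_eq_square algebra_simps)
  finally have "(2 * c) * (d \<bullet> e) \<le> (2 * c) * (c / 2 * (norm d)\<^sup>2 + 1 / (2 * c) * (norm e)\<^sup>2)"
    using assms by (simp add: algebra_simps power2_eq_square)
  then show ?thesis using assms by (simp add: mult_le_cancel_left)
qed

definition convex_conjugate :: "('a::real_inner \<Rightarrow> real) \<Rightarrow> 'a \<Rightarrow> real" where
  "convex_conjugate \<psi> y = (SUP x. x \<bullet> y - \<psi> x)"

lemma convex_conjugate_ge:
  assumes "bdd_above (range (\<lambda>x. x \<bullet> y - \<psi> x))"
  shows "x \<bullet> y - \<psi> x \<le> convex_conjugate \<psi> y"
  unfolding convex_conjugate_def by (rule cSUP_upper[OF UNIV_I assms])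

lemma affine_minorant_le_of_strongly_convex:
  fixes \<psi> :: "'a::real_inner \<Rightarrow> real"
  assumes strong: "\<And>x z. \<psi> z \<ge> \<psi> x + f x \<bullet> (z - x) + lam / 2 * (norm (x - z))\<^sup>2"
    and lam: "lam > 0"
  shows "x \<bullet> y - \<psi> x \<le> a \<bullet> y - \<psi> a + 1 / (2 * lam) * (norm (y - f a))\<^sup>2"
proof -
  have "\<psi> x \<ge> \<psi> a + f a \<bullet> (x - a) + lam / 2 * (norm (a - x))\<^sup>2"
    by (rule strong)
  moreover have "(x - a) \<bullet> (y - f a) \<le> lam / 2 * (norm (a - x))\<^sup>2 + 1 / (2 * lam) * (norm (y - f a))\<^sup>2"
    using inner_le_weighted_norms[OF lam, of "x - a"] by (simp add: norm_minus_commute)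
  ultimately show ?thesis
    by (simp add: inner_diff_left inner_diff_right inner_commute)
qed

lemma bdd_above_conjugate_of_strongly_convex:
  fixes \<psi> :: "'a::real_inner \<Rightarrow> real"
  assumes "\<And>x z. \<psi> z \<ge> \<psi> x + f x \<bullet> (z - x) + lam / 2 * (norm (x - z))\<^sup>2"
    and "lam > 0"
  shows "bdd_above (range (\<lambda>x. x \<bullet> y - \<psi> x))"
  using affine_minorant_le_of_strongly_convex[OF assms, of _ y 0] by (auto intro!: bdd_aboveI2)

lemma convex_conjugate_le_of_strongly_convex:
  fixes \<psi> :: "'a::real_inner \<Rightarrow> real"
  assumes "\<And>x z. \<psi> z \<ge> \<psi> x + f x \<bullet> (z - x) + lam / 2 * (norm (x - z))\<^sup>2"
    and "lam > 0"
  shows "convex_conjugate \<psi> y \<le> a \<bullet> y - \<psi> a + 1 / (2 * lam) * (norm (y - f a))\<^sup>2"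
  unfolding convex_conjugate_def
  by (rule cSUP_least, simp, rule affine_minorant_le_of_strongly_convex[OF assms])

lemma convex_conjugate_ge_of_smooth:
  fixes \<psi> :: "'a::real_inner \<Rightarrow> real"
  assumes smooth: "\<And>x z. \<psi> z \<le> \<psi> x + f x \<bullet> (z - x) + L / 2 * (norm (x - z))\<^sup>2"
    and L: "L > 0"
    and bdd: "bdd_above (range (\<lambda>x. x \<bullet> y - \<psi> x))"
  shows "convex_conjugate \<psi> y \<ge> a \<bullet> y - \<psi> a + 1 / (2 * L) * (norm (y - f a))\<^sup>2"
proof -
  define e where "e = y - f a"
  define x where "x = a + (1 / L) *\<^sub>R e"
  have "\<psi> x \<le> \<psi> a + f a \<bullet> (x - a) + L / 2 * (norm (a - x))\<^sup>2"
    by (rule smooth)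
  then have "\<psi> x \<le> \<psi> a + (1 / L) * (f a \<bullet> e) + 1 / (2 * L) * (norm e)\<^sup>2"
    using L by (simp add: x_def power2_eq_square field_simps)
  moreover have "x \<bullet> y = a \<bullet> y + (1 / L) * (f a \<bullet> e) + (1 / L) * (norm e)\<^sup>2"
    by (simp add: x_def e_def power2_norm_eq_inner inner_diff_left inner_commute algebra_simps)
  moreover have "x \<bullet> y - \<psi> x \<le> convex_conjugate \<psi> y"
    using bdd by (rule convex_conjugate_ge)
  moreover have "(1 / L) * (norm e)\<^sup>2 = 2 * (1 / (2 * L) * (norm e)\<^sup>2)"
    by simp
  ultimately show ?thesis
    unfolding e_def by linarith
qed

lemma convex_on_convex_conjugate:
  assumes bdd: "\<And>y. bdd_above (range (\<lambda>x. x \<bullet> y - \<psi> x))"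
  shows "convex_on UNIV (convex_conjugate \<psi>)"
proof (rule convex_onI)
  fix u :: real and y z :: 'a
  assume u: "0 < u" "u < 1"
  show "convex_conjugate \<psi> ((1 - u) *\<^sub>R y + u *\<^sub>R z)
      \<le> (1 - u) * convex_conjugate \<psi> y + u * convex_conjugate \<psi> z"
    unfolding convex_conjugate_def[of _ "(1 - u) *\<^sub>R y + u *\<^sub>R z"]
  proof (rule cSUP_least)
    fix x
    have "x \<bullet> ((1 - u) *\<^sub>R y + u *\<^sub>R z) - \<psi> x = (1 - u) * (x \<bullet> y - \<psi> x) + u * (x \<bullet> z - \<psi> x)"
      by (simp add: inner_add_right algebra_simps)
    also have "\<dots> \<le> (1 - u) * convex_conjugate \<psi> y + u * convex_conjugate \<psi> z"
      using u by (intro add_mono mult_left_mono convex_conjugate_ge bdd) auto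
    finally show "x \<bullet> ((1 - u) *\<^sub>R y + u *\<^sub>R z) - \<psi> x
        \<le> (1 - u) * convex_conjugate \<psi> y + u * convex_conjugate \<psi> z" .
  qed simp
qed simp

lemma scaled_barycenter_deviation_le:
  fixes \<psi> :: "'a::real_inner \<Rightarrow> real" and \<theta> :: "nat \<Rightarrow> 'a"
  assumes strong: "\<And>x z. \<psi> z \<ge> \<psi> x + f x \<bullet> (z - x) + lam / 2 * (norm (x - z))\<^sup>2"
    and lam: "lam > 0"
    and smooth: "\<And>x z. \<psi> z \<le> \<psi> x + f x \<bullet> (z - x) + L / 2 * (norm (x - z))\<^sup>2"
    and L: "L > 0"
    and g_nonneg: "\<And>j. j < p \<Longrightarrow> g j \<ge> 0"
    and g_sum: "(\<Sum>j<p. g j) = s" and s: "s > 0"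
  shows "s / (2 * L) * (norm ((1 / s) *\<^sub>R (\<Sum>j<p. g j *\<^sub>R \<theta> j) - f a))\<^sup>2
    \<le> (\<Sum>j<p. g j * (convex_conjugate \<psi> (\<theta> j) - a \<bullet> \<theta> j + \<psi> a))"
proof -
  define y where "y = (\<Sum>j<p. (g j / s) *\<^sub>R \<theta> j)"
  have y_alt: "(1 / s) *\<^sub>R (\<Sum>j<p. g j *\<^sub>R \<theta> j) = y"
    by (simp add: y_def scaleR_sum_right)
  have bdd: "bdd_above (range (\<lambda>x. x \<bullet> y - \<psi> x))" for y
    using strong lam by (rule bdd_above_conjugate_of_strongly_convex)
  have "a \<bullet> y - \<psi> a + 1 / (2 * L) * (norm (y - f a))\<^sup>2 \<le> convex_conjugate \<psi> y"
    using smooth L bdd by (rule convex_conjugate_ge_of_smooth)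
  also have "\<dots> \<le> (\<Sum>j<p. g j / s * convex_conjugate \<psi> (\<theta> j))"
    unfolding y_def
  proof (rule convex_on_sum)
    show "{..<p} \<noteq> {}" using g_sum s by auto
    show "(\<Sum>j<p. g j / s) = 1" using g_sum s by (simp flip: sum_divide_distrib)
  qed (use g_nonneg s convex_on_convex_conjugate[OF bdd] in auto)
  finally have "s * (a \<bullet> y - \<psi> a + 1 / (2 * L) * (norm (y - f a))\<^sup>2)
      \<le> s * (\<Sum>j<p. g j / s * convex_conjugate \<psi> (\<theta> j))"
    using s by (simp add: mult_left_mono)
  moreover have "s * (a \<bullet> y) = (\<Sum>j<p. g j * (a \<bullet> \<theta> j))"
    using s by (simp add: y_def inner_sum_right sum_distrib_left)
  moreover have "s * \<psi> a = (\<Sum>j<p. g j * \<psi> a)"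
    by (simp add: g_sum flip: sum_distrib_right)
  moreover have "s * (\<Sum>j<p. g j / s * convex_conjugate \<psi> (\<theta> j))
      = (\<Sum>j<p. g j * convex_conjugate \<psi> (\<theta> j))"
    using s by (simp add: sum_distrib_left)
  ultimately show ?thesis
    unfolding y_alt by (simp add: algebra_simps sum.distrib sum_subtractf)
qed

section \<open>Coupling matrices\<close>

definition coupling_matrix ::
    "nat \<Rightarrow> nat \<Rightarrow> (nat \<Rightarrow> real) \<Rightarrow> (nat \<Rightarrow> real) \<Rightarrow> (nat \<Rightarrow> nat \<Rightarrow> real) \<Rightarrow> bool" where
  "coupling_matrix n p r c G \<longleftrightarrow>
     (\<forall>i<n. \<forall>j<p. G i j \<ge> 0) \<and> (\<forall>i<n. (\<Sum>j<p. G i j) = r i) \<and> (\<forall>j<p. (\<Sum>i<n. G i j) = c j)"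

definition optimal_coupling_matrix :: "nat \<Rightarrow> nat \<Rightarrow> (nat \<Rightarrow> real) \<Rightarrow> (nat \<Rightarrow> real) \<Rightarrow>
    (nat \<Rightarrow> nat \<Rightarrow> real) \<Rightarrow> (nat \<Rightarrow> nat \<Rightarrow> real) \<Rightarrow> bool" where
  "optimal_coupling_matrix n p r c C \<Gamma> \<longleftrightarrow> coupling_matrix n p r c \<Gamma> \<and>
     (\<forall>G. coupling_matrix n p r c G \<longrightarrow>
        (\<Sum>i<n. \<Sum>j<p. \<Gamma> i j * C i j) \<le> (\<Sum>i<n. \<Sum>j<p. G i j * C i j))"

lemma coupling_matrix_sum_add_separable:
  assumes "coupling_matrix n p r c G"
  shows "(\<Sum>i<n. \<Sum>j<p. G i j * (C i j + a i + b j))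
    = (\<Sum>i<n. \<Sum>j<p. G i j * C i j) + (\<Sum>i<n. r i * a i) + (\<Sum>j<p. c j * b j)"
proof -
  have "(\<Sum>i<n. \<Sum>j<p. G i j * a i) = (\<Sum>i<n. r i * a i)"
    using assms by (simp add: coupling_matrix_def flip: sum_distrib_right)
  moreover have "(\<Sum>i<n. \<Sum>j<p. G i j * b j) = (\<Sum>j<p. c j * b j)"
    using assms by (subst sum.swap) (simp add: coupling_matrix_def flip: sum_distrib_right)
  ultimately show ?thesis
    by (simp add: distrib_left sum.distrib)
qed

lemma optimal_coupling_matrix_add_separable:
  assumes "optimal_coupling_matrix n p r c C \<Gamma>" and "coupling_matrix n p r c G"
  shows "(\<Sum>i<n. \<Sum>j<p. \<Gamma> i j * (C i j + a i + b j)) \<le> (\<Sum>i<n. \<Sum>j<p. G i j * (C i j + a i + b j))"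
  using assms coupling_matrix_sum_add_separable[of n p r c]
  by (simp add: optimal_coupling_matrix_def)

lemma barycentric_projection_error_le:
  fixes X \<theta> :: "nat \<Rightarrow> 'a::real_inner" and \<psi> :: "'a \<Rightarrow> real"
  assumes strong: "\<And>x z. \<psi> z \<ge> \<psi> x + f x \<bullet> (z - x) + lam / 2 * (norm (x - z))\<^sup>2"
    and lam: "lam > 0"
    and smooth: "\<And>x z. \<psi> z \<le> \<psi> x + f x \<bullet> (z - x) + L / 2 * (norm (x - z))\<^sup>2"
    and L: "L > 0"
    and r_pos: "\<And>i. i < n \<Longrightarrow> r i > 0"
    and \<Gamma>: "optimal_coupling_matrix n p r c (\<lambda>i j. 1 / 2 * (norm (X i - \<theta> j))\<^sup>2) \<Gamma>"
    and G: "coupling_matrix n p r c G"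
  shows "(\<Sum>i<n. r i * (norm ((1 / r i) *\<^sub>R (\<Sum>j<p. \<Gamma> i j *\<^sub>R \<theta> j) - f (X i)))\<^sup>2)
    \<le> L / lam * (\<Sum>i<n. \<Sum>j<p. G i j * (norm (f (X i) - \<theta> j))\<^sup>2)"
proof -
  define \<phi> where "\<phi> = convex_conjugate \<psi>"
  define D where "D i j = \<phi> (\<theta> j) - X i \<bullet> \<theta> j + \<psi> (X i)" for i j
  have D_eq: "D i j = 1 / 2 * (norm (X i - \<theta> j))\<^sup>2 + (\<psi> (X i) - 1 / 2 * (norm (X i))\<^sup>2)
      + (\<phi> (\<theta> j) - 1 / 2 * (norm (\<theta> j))\<^sup>2)" for i j
    unfolding D_def power2_norm_eq_inner
    by (simp add: inner_diff_left inner_diff_right inner_commute algebra_simps)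
  have "(\<Sum>i<n. r i * (norm ((1 / r i) *\<^sub>R (\<Sum>j<p. \<Gamma> i j *\<^sub>R \<theta> j) - f (X i)))\<^sup>2) / (2 * L)
      = (\<Sum>i<n. r i / (2 * L) * (norm ((1 / r i) *\<^sub>R (\<Sum>j<p. \<Gamma> i j *\<^sub>R \<theta> j) - f (X i)))\<^sup>2)"
    by (simp add: sum_divide_distrib)
  also have "\<dots> \<le> (\<Sum>i<n. \<Sum>j<p. \<Gamma> i j * D i j)"
    unfolding D_def \<phi>_def
  proof (rule sum_mono)
    fix i assume "i \<in> {..<n}"
    then show "r i / (2 * L) * (norm ((1 / r i) *\<^sub>R (\<Sum>j<p. \<Gamma> i j *\<^sub>R \<theta> j) - f (X i)))\<^sup>2
        \<le> (\<Sum>j<p. \<Gamma> i j * (convex_conjugate \<psi> (\<theta> j) - X i \<bullet> \<theta> j + \<psi> (X i)))"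
      using \<Gamma> r_pos
      by (intro scaled_barycenter_deviation_le[OF strong lam smooth L])
        (auto simp: optimal_coupling_matrix_def coupling_matrix_def)
  qed
  also have "\<dots> \<le> (\<Sum>i<n. \<Sum>j<p. G i j * D i j)"
    unfolding D_eq using \<Gamma> G by (rule optimal_coupling_matrix_add_separable)
  also have "\<dots> \<le> (\<Sum>i<n. \<Sum>j<p. G i j * (1 / (2 * lam) * (norm (f (X i) - \<theta> j))\<^sup>2))"
  proof (intro sum_mono mult_left_mono)
    fix i j assume "i \<in> {..<n}" "j \<in> {..<p}"
    then show "G i j \<ge> 0" using G by (simp add: coupling_matrix_def)
    show "D i j \<le> 1 / (2 * lam) * (norm (f (X i) - \<theta> j))\<^sup>2"
      using convex_conjugate_le_of_strongly_convex[OF strong lam, of "\<theta> j" "X i"]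
      by (simp add: D_def \<phi>_def norm_minus_commute)
  qed
  also have "\<dots> = (\<Sum>i<n. \<Sum>j<p. G i j * (norm (f (X i) - \<theta> j))\<^sup>2) / (2 * lam)"
    by (simp add: sum_divide_distrib)
  finally show ?thesis
    using L lam by (simp add: field_simps)
qed

section \<open>Couplings of atomic measures\<close>

lemma sets_atomic_measure [simp]: "sets (atomic_measure k w a) = sets borel"
  unfolding atomic_measure_def
  using sets.sigma_sets_eq[of borel] by simp

lemma emeasure_atomic_measure:
  assumes "A \<in> sets borel"
  shows "emeasure (atomic_measure k w a) A = (\<Sum>j<k. ennreal (w j) * indicator A (a j))"
  unfolding atomic_measure_def
proof (rule emeasure_measure_of_sigma)
  show "sigma_algebra UNIV (sets borel)"
    using sets.sigma_algebra_axioms[of borel] by simp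
  show "positive (sets borel) (\<lambda>A. \<Sum>j<k. ennreal (w j) * indicator A (a j))"
    by (simp add: positive_def)
  show "countably_additive (sets borel) (\<lambda>A. \<Sum>j<k. ennreal (w j) * indicator A (a j))"
  proof (rule countably_additiveI)
    fix A :: "nat \<Rightarrow> 'a set" assume "disjoint_family A"
    then show "(\<Sum>i. \<Sum>j<k. ennreal (w j) * indicator (A i) (a j))
        = (\<Sum>j<k. ennreal (w j) * indicator (\<Union>i. A i) (a j))"
      by (subst suminf_sum) (auto simp: suminf_indicator)
  qed
qed (rule assms)

definition atom_mass :: "nat \<Rightarrow> (nat \<Rightarrow> real) \<Rightarrow> (nat \<Rightarrow> 'a) \<Rightarrow> 'a \<Rightarrow> real" where
  "atom_mass k w a b = (\<Sum>l<k. if a l = b then w l else 0)"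

text \<open>Atoms may repeat; the mass sitting at a point is shared among the atoms located there in
  proportion to their weights.\<close>
definition atom_share :: "nat \<Rightarrow> (nat \<Rightarrow> real) \<Rightarrow> (nat \<Rightarrow> 'a) \<Rightarrow> nat \<Rightarrow> 'a \<Rightarrow> real" where
  "atom_share k w a j b = indicator {a j} b * (w j / atom_mass k w a (a j))"

lemma borel_measurable_atom_share [measurable]:
  "atom_share k w (a :: nat \<Rightarrow> 'a::euclidean_space) j \<in> borel_measurable borel"
  unfolding atom_share_def by measurable

lemma atom_mass_pos:
  assumes w: "\<And>l. l < k \<Longrightarrow> w l > 0" and j: "j < k"
  shows "atom_mass k w a (a j) > 0"
proof -
  have "(if a j = a j then w j else 0) \<le> atom_mass k w a (a j)"
    unfolding atom_mass_def by (rule member_le_sum) (use w j in \<open>auto intro: less_imp_le\<close>)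
  then show ?thesis using w[OF j] by simp
qed

lemma atom_share_nonneg:
  assumes "\<And>l. l < k \<Longrightarrow> w l > 0" and "j < k"
  shows "atom_share k w a j b \<ge> 0"
  unfolding atom_share_def using atom_mass_pos[where w=w and a=a, OF assms] assms
  by (intro mult_nonneg_nonneg divide_nonneg_nonneg) (auto intro: less_imp_le)

lemma sum_atom_share:
  assumes w: "\<And>l. l < k \<Longrightarrow> w l > 0"
  shows "(\<Sum>j<k. atom_share k w a j b) = indicator (a ` {..<k}) b"
proof (cases "b \<in> a ` {..<k}")
  case True
  then obtain j0 where j0: "j0 < k" "b = a j0" by auto
  have "(\<Sum>j<k. atom_share k w a j b) = (\<Sum>j<k. (if a j = b then w j else 0) / atom_mass k w a b)"
    by (rule sum.cong) (auto simp: atom_share_def)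
  also have "\<dots> = 1"
    using atom_mass_pos[where w=w and a=a, OF w j0(1)] j0
    by (simp add: atom_mass_def flip: sum_divide_distrib)
  finally show ?thesis using True by simp
next
  case False
  then show ?thesis by (auto simp: atom_share_def indicator_def intro!: sum.neutral)
qed

lemma integral_atom_share:
  assumes w: "\<And>l. l < k \<Longrightarrow> w l > 0" and j: "j < k"
  shows "(\<integral>b. atom_share k w a j b \<partial>atomic_measure k w a) = w j"
proof -
  have "emeasure (atomic_measure k w a) {a j} = (\<Sum>l<k. ennreal (w l) * indicator {a j} (a l))"
    by (rule emeasure_atomic_measure) simp
  also have "\<dots> = (\<Sum>l<k. ennreal (if a l = a j then w l else 0))"
    by (rule sum.cong) (simp_all add: indicator_def)
  also have "\<dots> = ennreal (atom_mass k w a (a j))"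
    unfolding atom_mass_def by (rule sum_ennreal) (use w in \<open>auto intro: less_imp_le\<close>)
  finally have "measure (atomic_measure k w a) {a j} = atom_mass k w a (a j)"
    using atom_mass_pos[where w=w and a=a, OF w j] by (simp add: measure_def)
  then show ?thesis
    using atom_mass_pos[where w=w and a=a, OF w j] by (simp add: atom_share_def)
qed

lemma integral_atom_share_distr:
  assumes g: "g \<in> measurable M borel" and distr: "distr M borel g = atomic_measure k w a"
    and w: "\<And>l. l < k \<Longrightarrow> w l > 0" and j: "j < k"
  shows "(\<integral>z. atom_share k w a j (g z) \<partial>M) = w j"
proof -
  have "(\<integral>z. atom_share k w a j (g z) \<partial>M) = (\<integral>b. atom_share k w a j b \<partial>atomic_measure k w a)"
    unfolding distr[symmetric] by (rule integral_distr[symmetric, OF g]) simp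
  also have "\<dots> = w j"
    by (rule integral_atom_share[OF w j])
  finally show ?thesis .
qed

lemma AE_in_atoms_of_distr_atomic:
  assumes g: "g \<in> measurable M borel" and distr: "distr M borel g = atomic_measure k w a"
  shows "AE z in M. g z \<in> a ` {..<k}"
proof (rule AE_I')
  have closed: "closed (a ` {..<k})" by (rule finite_imp_closed) simp
  then have "emeasure M (g -` (UNIV - a ` {..<k}) \<inter> space M) = 0"
    using emeasure_distr[OF g, of "UNIV - a ` {..<k}"] emeasure_atomic_measure[of "UNIV - a ` {..<k}"]
    by (auto simp: distr)
  then show "g -` (UNIV - a ` {..<k}) \<inter> space M \<in> null_sets M"
    using measurable_sets[OF g, of "UNIV - a ` {..<k}"] closed by (auto simp: null_sets_def)
qed auto

locale atomic_coupling =
  fixes \<gamma> :: "('a::euclidean_space \<times> 'b::euclidean_space) measure"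
    and n p :: nat and w1 w2 :: "nat \<Rightarrow> real" and t :: "nat \<Rightarrow> 'a" and \<theta> :: "nat \<Rightarrow> 'b"
  assumes w1_pos: "\<And>i. i < n \<Longrightarrow> w1 i > 0"
    and w2_pos: "\<And>j. j < p \<Longrightarrow> w2 j > 0"
    and sets_coupling: "sets \<gamma> = sets (borel \<Otimes>\<^sub>M borel)"
    and fst_marginal: "distr \<gamma> borel fst = atomic_measure n w1 t"
    and snd_marginal: "distr \<gamma> borel snd = atomic_measure p w2 \<theta>"
begin

lemma measurable_coupling_eq: "measurable \<gamma> N = measurable (borel \<Otimes>\<^sub>M borel) N"
  by (rule measurable_cong_sets[OF sets_coupling refl])

lemma measurable_fst_coupling: "fst \<in> measurable \<gamma> borel"
  unfolding measurable_coupling_eq by (rule measurable_fst)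

lemma measurable_snd_coupling: "snd \<in> measurable \<gamma> borel"
  unfolding measurable_coupling_eq by (rule measurable_snd)

sublocale finite_measure \<gamma>
proof
  have "emeasure \<gamma> (space \<gamma>) = emeasure (atomic_measure n w1 t) UNIV"
    using emeasure_distr[OF measurable_fst_coupling, of UNIV] fst_marginal by simp
  also have "\<dots> = (\<Sum>i<n. ennreal (w1 i))"
    by (simp add: emeasure_atomic_measure)
  finally show "emeasure \<gamma> (space \<gamma>) \<noteq> \<infinity>" by simp
qed

definition share_product :: "nat \<Rightarrow> nat \<Rightarrow> 'a \<times> 'b \<Rightarrow> real" where
  "share_product i j z = atom_share n w1 t i (fst z) * atom_share p w2 \<theta> j (snd z)"

definition cell_mass :: "nat \<Rightarrow> nat \<Rightarrow> real" where
  "cell_mass i j = (\<integral>z. share_product i j z \<partial>\<gamma>)"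

lemma borel_measurable_share_product: "share_product i j \<in> borel_measurable \<gamma>"
  unfolding share_product_def
  by (intro borel_measurable_times measurable_compose[OF measurable_fst_coupling]
      measurable_compose[OF measurable_snd_coupling] borel_measurable_atom_share)

lemma integrable_share_product: "integrable \<gamma> (share_product i j)"
proof (rule integrable_const_bound)
  show "AE z in \<gamma>. norm (share_product i j z)
      \<le> \<bar>w1 i / atom_mass n w1 t (t i)\<bar> * \<bar>w2 j / atom_mass p w2 \<theta> (\<theta> j)\<bar>"
    by (auto simp: share_product_def atom_share_def indicator_def abs_mult)
qed (rule borel_measurable_share_product)

lemma AE_atoms: "AE z in \<gamma>. fst z \<in> t ` {..<n} \<and> snd z \<in> \<theta> ` {..<p}"
  using AE_in_atoms_of_distr_atomic[OF measurable_fst_coupling fst_marginal]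
    AE_in_atoms_of_distr_atomic[OF measurable_snd_coupling snd_marginal]
  by eventually_elim simp

lemma row_sum_cell_mass:
  assumes "i < n"
  shows "(\<Sum>j<p. cell_mass i j) = w1 i"
proof -
  have "(\<Sum>j<p. cell_mass i j) = (\<integral>z. (\<Sum>j<p. share_product i j z) \<partial>\<gamma>)"
    unfolding cell_mass_def by (simp add: integrable_share_product)
  also have "\<dots> = (\<integral>z. atom_share n w1 t i (fst z) \<partial>\<gamma>)"
  proof (rule integral_cong_AE)
    show "AE z in \<gamma>. (\<Sum>j<p. share_product i j z) = atom_share n w1 t i (fst z)"
      using AE_atoms by eventually_elim
        (simp add: share_product_def sum_atom_share[OF w2_pos] flip: sum_distrib_left)
  qed (simp_all add: borel_measurable_sum borel_measurable_share_product
      measurable_compose[OF measurable_fst_coupling borel_measurable_atom_share])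
  also have "\<dots> = w1 i"
    by (rule integral_atom_share_distr[OF measurable_fst_coupling fst_marginal w1_pos assms])
  finally show ?thesis .
qed

lemma column_sum_cell_mass:
  assumes "j < p"
  shows "(\<Sum>i<n. cell_mass i j) = w2 j"
proof -
  have "(\<Sum>i<n. cell_mass i j) = (\<integral>z. (\<Sum>i<n. share_product i j z) \<partial>\<gamma>)"
    unfolding cell_mass_def by (simp add: integrable_share_product)
  also have "\<dots> = (\<integral>z. atom_share p w2 \<theta> j (snd z) \<partial>\<gamma>)"
  proof (rule integral_cong_AE)
    show "AE z in \<gamma>. (\<Sum>i<n. share_product i j z) = atom_share p w2 \<theta> j (snd z)"
      using AE_atoms by eventually_elim
        (simp add: share_product_def sum_atom_share[OF w1_pos] flip: sum_distrib_right)
  qed (simp_all add: borel_measurable_sum borel_measurable_share_product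
      measurable_compose[OF measurable_snd_coupling borel_measurable_atom_share])
  also have "\<dots> = w2 j"
    by (rule integral_atom_share_distr[OF measurable_snd_coupling snd_marginal w2_pos assms])
  finally show ?thesis .
qed

lemma coupling_matrix_cell_mass: "coupling_matrix n p w1 w2 cell_mass"
  unfolding coupling_matrix_def
proof (intro conjI allI impI)
  fix i j assume "i < n" "j < p"
  then show "cell_mass i j \<ge> 0"
    unfolding cell_mass_def share_product_def
    by (intro integral_nonneg_AE AE_I2 mult_nonneg_nonneg atom_share_nonneg w1_pos w2_pos)
qed (simp_all add: row_sum_cell_mass column_sum_cell_mass)

lemma transport_cost_cell_mass_le:
  assumes c_nonneg: "\<And>x y. c x y \<ge> 0"
  shows "ennreal (\<Sum>i<n. \<Sum>j<p. cell_mass i j * c (t i) (\<theta> j))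
    \<le> (\<integral>\<^sup>+ z. ennreal (c (fst z) (snd z)) \<partial>\<gamma>)"
proof -
  define H where "H z = (\<Sum>i<n. \<Sum>j<p. share_product i j z * c (t i) (\<theta> j))" for z
  have H_eq: "H z = indicator (t ` {..<n}) (fst z) * indicator (\<theta> ` {..<p}) (snd z)
      * c (fst z) (snd z)" for z
  proof -
    have at_atom: "share_product i j z * c (t i) (\<theta> j) = share_product i j z * c (fst z) (snd z)" for i j
      by (cases "fst z = t i"; cases "snd z = \<theta> j") (auto simp: share_product_def atom_share_def)
    have "H z = (\<Sum>i<n. \<Sum>j<p. share_product i j z) * c (fst z) (snd z)"
      unfolding H_def at_atom by (simp add: sum_distrib_right)
    also have "\<dots> = (\<Sum>i<n. atom_share n w1 t i (fst z)) * (\<Sum>j<p. atom_share p w2 \<theta> j (snd z))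
        * c (fst z) (snd z)"
      by (simp add: share_product_def sum_product)
    finally show ?thesis
      by (simp add: sum_atom_share[OF w1_pos] sum_atom_share[OF w2_pos])
  qed
  have integrable_H: "integrable \<gamma> H"
    unfolding H_def by (simp add: integrable_share_product)
  have "ennreal (\<Sum>i<n. \<Sum>j<p. cell_mass i j * c (t i) (\<theta> j)) = ennreal (\<integral>z. H z \<partial>\<gamma>)"
    by (simp add: H_def cell_mass_def integrable_share_product)
  also have "\<dots> = (\<integral>\<^sup>+ z. ennreal (H z) \<partial>\<gamma>)"
    using c_nonneg
    by (intro nn_integral_eq_integral[symmetric] AE_I2 integrable_H) (simp add: H_eq)
  also have "\<dots> \<le> (\<integral>\<^sup>+ z. ennreal (c (fst z) (snd z)) \<partial>\<gamma>)"
    using c_nonneg by (intro nn_integral_mono ennreal_leI) (simp add: H_eq indicator_def)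
  finally show ?thesis .
qed

end

lemma W2sq_atomic_ge:
  fixes t \<theta> :: "nat \<Rightarrow> 'a::euclidean_space"
  assumes "\<And>i. i < n \<Longrightarrow> w1 i > 0" and "\<And>j. j < p \<Longrightarrow> w2 j > 0" and k: "k > 0"
    and bound: "\<And>G. coupling_matrix n p w1 w2 G \<Longrightarrow>
      x \<le> k * (\<Sum>i<n. \<Sum>j<p. G i j * (norm (t i - \<theta> j))\<^sup>2)"
  shows "ennreal x \<le> ennreal k * W2sq (atomic_measure n w1 t) (atomic_measure p w2 \<theta>)"
proof -
  have "ennreal (x / k) \<le> W2sq (atomic_measure n w1 t) (atomic_measure p w2 \<theta>)"
    unfolding W2sq_def
  proof (rule Inf_greatest, clarify)
    fix \<gamma> :: "('a \<times> 'a) measure"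
    assume "sets \<gamma> = sets (borel \<Otimes>\<^sub>M borel)"
      and "distr \<gamma> borel fst = atomic_measure n w1 t" and "distr \<gamma> borel snd = atomic_measure p w2 \<theta>"
    then interpret atomic_coupling \<gamma> n p w1 w2 t \<theta>
      using assms by unfold_locales
    have "ennreal (x / k) \<le> ennreal (\<Sum>i<n. \<Sum>j<p. cell_mass i j * (norm (t i - \<theta> j))\<^sup>2)"
      using bound[OF coupling_matrix_cell_mass] k by (intro ennreal_leI) (simp add: pos_divide_le_eq mult.commute)
    also have "\<dots> \<le> (\<integral>\<^sup>+ z. ennreal ((norm (fst z - snd z))\<^sup>2) \<partial>\<gamma>)"
      by (rule transport_cost_cell_mass_le[where c="\<lambda>x y. (norm (x - y))\<^sup>2"]) simp
    finally show "ennreal (x / k) \<le> (\<integral>\<^sup>+ z. ennreal ((norm (fst z - snd z))\<^sup>2) \<partial>\<gamma>)" .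
  qed
  then have "ennreal k * ennreal (x / k) \<le> ennreal k * W2sq (atomic_measure n w1 t) (atomic_measure p w2 \<theta>)"
    by (rule mult_left_mono) simp
  then show ?thesis
    using k by (simp flip: ennreal_mult')
qed

theorem theorem4:
  fixes X :: "nat \<Rightarrow> 'a::euclidean_space"
    and \<psi> :: "'a \<Rightarrow> real" and f :: "'a \<Rightarrow> 'a"
    and n p :: nat and lam L B :: real
    and \<alpha> :: "nat \<Rightarrow> real" and \<theta> :: "nat \<Rightarrow> 'a"
    and \<Gamma> :: "nat \<Rightarrow> nat \<Rightarrow> real"
  assumes n_pos: "n \<ge> 1"
    and grad: "\<And>x. (\<psi> has_derivative (\<lambda>h. f x \<bullet> h)) (at x)"
    and lam_pos: "lam > 0"
    and A1: "\<And>x z. \<psi> z \<ge> \<psi> x + f x \<bullet> (z - x) + lam / 2 * (norm (x - z))\<^sup>2"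
    and L_pos: "L > 0"
    and A2: "\<And>x z. \<psi> z \<le> \<psi> x + f x \<bullet> (z - x) + L / 2 * (norm (x - z))\<^sup>2"
    and A3: "\<And>i. i < n \<Longrightarrow> norm (f (X i)) \<le> B"
    and alpha_pos: "\<And>j. j < p \<Longrightarrow> \<alpha> j > 0"
    and alpha_sum: "(\<Sum>j<p. \<alpha> j) = 1"
    and Gamma_nonneg: "\<And>i j. i < n \<Longrightarrow> j < p \<Longrightarrow> \<Gamma> i j \<ge> 0"
    and Gamma_col: "\<And>j. j < p \<Longrightarrow> (\<Sum>i<n. \<Gamma> i j) = \<alpha> j"
    and Gamma_row: "\<And>i. i < n \<Longrightarrow> (\<Sum>j<p. \<Gamma> i j) = 1 / real n"
    and Gamma_opt: "\<And>G. (\<forall>i<n. \<forall>j<p. G i j \<ge> 0) \<Longrightarrow>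
          (\<forall>j<p. (\<Sum>i<n. G i j) = \<alpha> j) \<Longrightarrow>
          (\<forall>i<n. (\<Sum>j<p. G i j) = 1 / real n) \<Longrightarrow>
          (\<Sum>i<n. \<Sum>j<p. \<Gamma> i j * (1/2 * (norm (X i - \<theta> j))\<^sup>2))
            \<le> (\<Sum>i<n. \<Sum>j<p. G i j * (1/2 * (norm (X i - \<theta> j))\<^sup>2))"
  shows "ennreal ((1 / real n) * (\<Sum>i<n.
            (norm (real n *\<^sub>R (\<Sum>j<p. \<Gamma> i j *\<^sub>R \<theta> j) - f (X i)))\<^sup>2))
         \<le> ennreal (L / lam) *
            W2sq (atomic_measure n (\<lambda>_. 1 / real n) (\<lambda>i. f (X i)))
                 (atomic_measure p \<alpha> \<theta>)"
proof -
  have \<Gamma>: "optimal_coupling_matrix n p (\<lambda>_. 1 / real n) \<alpha> (\<lambda>i j. 1 / 2 * (norm (X i - \<theta> j))\<^sup>2) \<Gamma>"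
    using Gamma_nonneg Gamma_row Gamma_col Gamma_opt
    by (simp add: optimal_coupling_matrix_def coupling_matrix_def)
  show ?thesis
  proof (rule W2sq_atomic_ge)
    fix G assume G: "coupling_matrix n p (\<lambda>_. 1 / real n) \<alpha> G"
    have "(1 / real n) * (\<Sum>i<n. (norm (real n *\<^sub>R (\<Sum>j<p. \<Gamma> i j *\<^sub>R \<theta> j) - f (X i)))\<^sup>2)
        = (\<Sum>i<n. 1 / real n *
            (norm ((1 / (1 / real n)) *\<^sub>R (\<Sum>j<p. \<Gamma> i j *\<^sub>R \<theta> j) - f (X i)))\<^sup>2)"
      by (simp add: sum_distrib_left)
    also have "\<dots> \<le> L / lam * (\<Sum>i<n. \<Sum>j<p. G i j * (norm (f (X i) - \<theta> j))\<^sup>2)"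
      using n_pos by (intro barycentric_projection_error_le[OF A1 lam_pos A2 L_pos _ \<Gamma> G]) simp
    finally show "(1 / real n) * (\<Sum>i<n. (norm (real n *\<^sub>R (\<Sum>j<p. \<Gamma> i j *\<^sub>R \<theta> j) - f (X i)))\<^sup>2)
        \<le> L / lam * (\<Sum>i<n. \<Sum>j<p. G i j * (norm (f (X i) - \<theta> j))\<^sup>2)" .
  qed (use n_pos alpha_pos lam_pos L_pos in auto)
qed

end
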